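(* Let $\varphi$ be an automorphism of the Grassmann algebra $E$ with $\varphi^{2}=\mathrm{id}_E$, and let $\beta=\{e_1,e_2,\ldots\}$ be a basis of $L$ (the generators of $E$). Put $I_\beta=\{n\in\mathbb{N}\mid \varphi(e_n)=\pm e_n\}$. Suppose that $I_\beta$ is infinite and $I_\beta\neq\mathbb{N}$. Then $\varphi$ is of canonical type, i.e. $\varphi(E_{(0)})=E_{(0)}$ and $\varphi(E_{(1)})=E_{(1)}$.
   Context: $F$ is a field of characteristic zero, $L$ is an infinite-dimensional $F$-vector space with basis $e_1,e_2,\ldots$, and $E$ is the Grassmann (exterior) algebra of $L$: it has basis $1$ and the monomials $e_{i_1}\cdots e_{i_k}$ with $i_1<\cdots<i_k$, $k\ge1$, with $e_ie_j=-e_je_i$. The natural grading $E_{can}=E_{(0)}\oplus E_{(1)}$ has $E_{(0)}$ spanned by $1$ and the monomials of even length and $E_{(1)}$ spanned by the monomials of odd length. An automorphism $\varphi$ of $E$ with $\varphi^2=\mathrm{id}$ is of canonical type if $\varphi(E_{(0)})=E_{(0)}$ and $\varphi(E_{(1)})=E_{(1)}$. *)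

theory Defs
  imports Main
begin

text \<open>Grassmann algebra E over a field F of characteristic zero, generated by
 e_0, e_1, e_2, ... (indexed from 0). An element is represented by its coefficient
 function on monomials; a monomial e_{i_1}...e_{i_k} with i_1 < ... < i_k is
 represented by the finite set {i_1,...,i_k} (the empty set is the unit 1).\<close>

definition grass :: "(nat set \<Rightarrow> 'a::field) set" where
  "grass = {x. finite {S. x S \<noteq> 0} \<and> (\<forall>S. x S \<noteq> 0 \<longrightarrow> finite S)}"

definition gadd :: "(nat set \<Rightarrow> 'a::field) \<Rightarrow> (nat set \<Rightarrow> 'a) \<Rightarrow> nat set \<Rightarrow> 'a" where
  "gadd x y = (\<lambda>S. x S + y S)"

definition gscale :: "'a::field \<Rightarrow> (nat set \<Rightarrow> 'a) \<Rightarrow> nat set \<Rightarrow> 'a" where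
  "gscale c x = (\<lambda>S. c * x S)"

text \<open>Sign of the permutation sorting the concatenation of monomials A and B.\<close>
definition gsign :: "nat set \<Rightarrow> nat set \<Rightarrow> 'a::field" where
  "gsign A B = (- 1) ^ card {(a, b). a \<in> A \<and> b \<in> B \<and> b < a}"

definition gmult :: "(nat set \<Rightarrow> 'a::field) \<Rightarrow> (nat set \<Rightarrow> 'a) \<Rightarrow> nat set \<Rightarrow> 'a" where
  "gmult x y = (\<lambda>S. if finite S then (\<Sum>A\<in>Pow S. gsign A (S - A) * x A * y (S - A)) else 0)"

definition gone :: "nat set \<Rightarrow> 'a::field" where
  "gone = (\<lambda>S. if S = {} then 1 else 0)"

definition gen :: "nat \<Rightarrow> nat set \<Rightarrow> 'a::field" where
  "gen n = (\<lambda>S. if S = {n} then 1 else 0)"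

definition gL :: "(nat set \<Rightarrow> 'a::field) set" where
  "gL = {x \<in> grass. \<forall>S. x S \<noteq> 0 \<longrightarrow> card S = 1}"

definition gE0 :: "(nat set \<Rightarrow> 'a::field) set" where
  "gE0 = {x \<in> grass. \<forall>S. x S \<noteq> 0 \<longrightarrow> even (card S)}"

definition gE1 :: "(nat set \<Rightarrow> 'a::field) set" where
  "gE1 = {x \<in> grass. \<forall>S. x S \<noteq> 0 \<longrightarrow> odd (card S)}"

definition grass_aut :: "((nat set \<Rightarrow> 'a::field) \<Rightarrow> (nat set \<Rightarrow> 'a)) \<Rightarrow> bool" where
  "grass_aut \<phi> \<longleftrightarrow> bij_betw \<phi> grass grass
     \<and> (\<forall>x\<in>grass. \<forall>y\<in>grass. \<phi> (gadd x y) = gadd (\<phi> x) (\<phi> y))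
     \<and> (\<forall>c. \<forall>x\<in>grass. \<phi> (gscale c x) = gscale c (\<phi> x))
     \<and> (\<forall>x\<in>grass. \<forall>y\<in>grass. \<phi> (gmult x y) = gmult (\<phi> x) (\<phi> y))
     \<and> \<phi> gone = gone"

definition is_L_basis :: "(nat \<Rightarrow> nat set \<Rightarrow> 'a::field) \<Rightarrow> bool" where
  "is_L_basis b \<longleftrightarrow> (\<forall>n. b n \<in> gL)
     \<and> (\<forall>(c::nat \<Rightarrow> 'a) N. (\<forall>S. (\<Sum>n<N. c n * b n S) = 0) \<longrightarrow> (\<forall>n<N. c n = 0))
     \<and> (\<forall>x\<in>gL. \<exists>(c::nat \<Rightarrow> 'a) N. x = (\<lambda>S. \<Sum>n<N. c n * b n S))"

definition I_beta :: "((nat set \<Rightarrow> 'a::field) \<Rightarrow> (nat set \<Rightarrow> 'a)) \<Rightarrow> (nat \<Rightarrow> nat set \<Rightarrow> 'a) \<Rightarrow> nat set" where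
  "I_beta \<phi> b = {n. \<phi> (b n) = b n \<or> \<phi> (b n) = gscale (- 1) (b n)}"

end

theory Submission
  imports Defs "HOL-Library.Function_Algebras" "HOL.Vector_Spaces"
begin

text \<open>Let \<open>y = \<phi>(e\<^sub>m)\<close>. Since \<open>e\<^sub>m\<close> anticommutes with every vector of \<open>L\<close>, \<open>y\<close> anticommutes
  with \<open>\<phi>(b\<^sub>n) = \<plusminus>b\<^sub>n\<close> for every \<open>n \<in> I\<^sub>\<beta>\<close>. As \<open>I\<^sub>\<beta>\<close> is infinite and the \<open>b\<^sub>n\<close> are linearly
  independent, one of these \<open>b\<^sub>n\<close> has a nonzero component \<open>e\<^sub>j\<close> with \<open>j\<close> outside the finitely
  many indices occurring in \<open>y\<close>. Comparing the coefficients of \<open>S \<union> {j}\<close> in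
  \<open>y b\<^sub>n = - b\<^sub>n y\<close> then shows that every monomial \<open>S\<close> of \<open>y\<close> has odd length (this is where
  \<open>2 \<noteq> 0\<close> is needed). So \<open>\<phi>\<close> maps the generators into E_(1); by multiplicativity and
  linearity it maps E_(0) and E_(1) into themselves, and \<open>\<phi>\<^sup>2 = id\<close> gives equality.\<close>

subsection \<open>Elements of the Grassmann algebra\<close>

lemma sum_apply: "(\<Sum>a\<in>A. f a) x = (\<Sum>a\<in>A. f a x)"
  by (induction A rule: infinite_finite_induct) auto

lemma gadd_eq_plus: "gadd = (+)"
  by (simp add: gadd_def fun_eq_iff)

global_interpretation gvec: vector_space "gscale :: 'a::field \<Rightarrow> (nat set \<Rightarrow> 'a) \<Rightarrow> _"
  by unfold_locales (auto simp: gscale_def fun_eq_iff algebra_simps)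

definition gmonom :: "nat set \<Rightarrow> nat set \<Rightarrow> 'a::field" where
  "gmonom S = (\<lambda>T. if T = S then 1 else 0)"

lemma gone_eq_gmonom: "gone = gmonom {}"
  by (simp add: gone_def gmonom_def)

lemma gen_eq_gmonom: "gen i = gmonom {i}"
  by (simp add: gen_def gmonom_def)

lemma plus_in_grass:
  assumes x: "x \<in> grass" and y: "y \<in> grass"
  shows "x + y \<in> grass"
proof -
  have "{S. x S + y S \<noteq> 0} \<subseteq> {S. x S \<noteq> 0} \<union> {S. y S \<noteq> 0}" by auto
  then have "finite {S. x S + y S \<noteq> 0}"
    by (rule finite_subset) (use x y in \<open>simp add: grass_def\<close>)
  moreover have "finite S" if "x S + y S \<noteq> 0" for S
  proof -
    have "x S \<noteq> 0 \<or> y S \<noteq> 0" using that by auto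
    then show ?thesis using x y by (auto simp: grass_def)
  qed
  ultimately show ?thesis by (simp add: grass_def)
qed

lemma gscale_in_grass:
  assumes x: "x \<in> grass"
  shows "gscale c x \<in> grass"
proof -
  have "{S. c * x S \<noteq> 0} \<subseteq> {S. x S \<noteq> 0}" by auto
  then have "finite {S. c * x S \<noteq> 0}"
    by (rule finite_subset) (use x in \<open>simp add: grass_def\<close>)
  then show ?thesis using x by (simp add: grass_def gscale_def)
qed

lemma subspace_grass: "gvec.subspace grass"
  unfolding gvec.subspace_def
proof (intro conjI ballI allI)
  show "0 \<in> grass" by (simp add: grass_def)
qed (simp_all add: plus_in_grass gscale_in_grass)

lemma gmonom_in_grass: "finite S \<Longrightarrow> gmonom S \<in> grass"
  by (simp add: grass_def gmonom_def)

lemma gen_in_grass: "gen m \<in> grass"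
  by (simp add: gen_eq_gmonom gmonom_in_grass)

lemma gL_subset_grass: "gL \<subseteq> grass"
  by (auto simp: gL_def)

lemma grass_eq_sum_gmonom:
  assumes "x \<in> grass"
  shows "x = (\<Sum>S\<in>{S. x S \<noteq> 0}. gscale (x S) (gmonom S))"
proof
  fix T
  have "finite {S. x S \<noteq> 0}" using assms by (simp add: grass_def)
  then show "x T = (\<Sum>S\<in>{S. x S \<noteq> 0}. gscale (x S) (gmonom S)) T"
    by (simp add: sum_apply gscale_def gmonom_def if_distrib[of "(*) _"] cong: if_cong)
qed


subsection \<open>Signs and products\<close>

lemma gsign_nonzero: "gsign A B \<noteq> (0::'a::field)"
  by (simp add: gsign_def)

lemma gsign_square: "gsign A B * gsign A B = (1::'a::field)"
  by (simp add: gsign_def flip: power_add)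

lemma gsign_singleton_commute:
  assumes B: "finite B" and j: "j \<notin> B"
  shows "gsign B {j} = (-1) ^ card B * (gsign {j} B :: 'a::field)"
proof -
  let ?above = "{a\<in>B. j < a}" and ?below = "{b\<in>B. b < j}"
  have "{(a, b). a \<in> B \<and> b \<in> {j} \<and> b < a} = (\<lambda>a. (a, j)) ` ?above" by auto
  then have "gsign B {j} = ((-1) ^ card ?above :: 'a)"
    by (simp add: gsign_def card_image inj_on_def)
  moreover have "{(a, b). a \<in> {j} \<and> b \<in> B \<and> b < a} = (\<lambda>b. (j, b)) ` ?below" by auto
  then have "gsign {j} B = ((-1) ^ card ?below :: 'a)"
    by (simp add: gsign_def card_image inj_on_def)
  moreover have "card B = card ?above + card ?below"
  proof -
    have "B = ?above \<union> ?below" using j by (auto simp: not_less order.order_iff_strict)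
    also have "card \<dots> = card ?above + card ?below"
      by (rule card_Un_disjoint) (use B in auto)
    finally show ?thesis .
  qed
  moreover have "(-1::'a) ^ card ?below * (-1) ^ card ?below = 1"
    by (simp flip: power_add)
  ultimately show ?thesis
    by (simp add: power_add mult.assoc)
qed

lemma gmult_gscale_left: "gmult (gscale c x) y = gscale c (gmult x y)"
  unfolding gmult_def gscale_def by (auto simp: fun_eq_iff sum_distrib_left ac_simps)

lemma gmult_gscale_right: "gmult x (gscale c y) = gscale c (gmult x y)"
  unfolding gmult_def gscale_def by (auto simp: fun_eq_iff sum_distrib_left ac_simps)

lemma gmult_single_term:
  assumes T: "finite T" and A0: "A0 \<subseteq> T"
    and unique: "\<And>A. A \<subseteq> T \<Longrightarrow> x A \<noteq> 0 \<Longrightarrow> y (T - A) \<noteq> 0 \<Longrightarrow> A = A0"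
  shows "gmult x y T = gsign A0 (T - A0) * x A0 * y (T - A0)"
proof -
  have "gmult x y T = (\<Sum>A\<in>Pow T. gsign A (T - A) * x A * y (T - A))"
    using T by (simp add: gmult_def)
  also have "\<dots> = (\<Sum>A\<in>Pow T. if A = A0 then gsign A0 (T - A0) * x A0 * y (T - A0) else 0)"
    by (rule sum.cong) (use unique in auto)
  also have "\<dots> = gsign A0 (T - A0) * x A0 * y (T - A0)"
    using T A0 by simp
  finally show ?thesis .
qed

lemma gmult_gen_left:
  assumes "finite T"
  shows "gmult (gen i) y T = (if i \<in> T then gsign {i} (T - {i}) * y (T - {i}) else 0)"
  using assms by (auto simp: gmult_def gen_def if_distrib[of "\<lambda>c. _ * c * _"] cong: if_cong)

lemma gmult_gen_right:
  assumes T: "finite T"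
  shows "gmult x (gen i) T = (if i \<in> T then gsign (T - {i}) {i} * x (T - {i}) else 0)"
proof (cases "i \<in> T")
  case True
  have "A = T - {i}" if "A \<subseteq> T" "gen i (T - A) \<noteq> (0::'a)" for A
    using that by (auto simp: gen_def split: if_splits)
  then have "gmult x (gen i) T = gsign (T - {i}) (T - (T - {i})) * x (T - {i}) * gen i (T - (T - {i}))"
    using T by (intro gmult_single_term) auto
  also have "T - (T - {i}) = {i}" using True by auto
  finally show ?thesis using True by (simp add: gen_def)
next
  case False
  then show ?thesis using T False by (auto simp: gmult_def gen_def intro!: sum.neutral)
qed

lemma gen_anticommute_gL:
  assumes l: "l \<in> gL"
  shows "gmult (gen m) l = gmult l (gscale (-1) (gen m))"
proof
  fix T
  show "gmult (gen m) l T = gmult l (gscale (-1) (gen m)) T"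
  proof (cases "finite T")
    case False
    then show ?thesis by (simp add: gmult_def)
  next
    case T: True
    have "gsign (T - {m}) {m} * l (T - {m}) = - (gsign {m} (T - {m}) * l (T - {m}))"
    proof (cases "l (T - {m}) = 0")
      case False
      then have "card (T - {m}) = 1" using l by (auto simp: gL_def)
      then have "gsign (T - {m}) {m} = - (gsign {m} (T - {m}) :: 'a)"
        using gsign_singleton_commute[of "T - {m}" m] T by simp
      then show ?thesis by simp
    qed simp
    then show ?thesis
      using T by (simp only: gmult_gscale_right) (simp add: gmult_gen_left gmult_gen_right gscale_def)
  qed
qed

lemma gmonom_insert:
  assumes "finite S" "i \<notin> S"
  shows "gmonom (insert i S) = gmult (gscale (gsign {i} S) (gen i)) (gmonom S :: nat set \<Rightarrow> 'a::field)"
proof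
  fix T
  show "gmonom (insert i S) T = gmult (gscale (gsign {i} S) (gen i)) (gmonom S :: nat set \<Rightarrow> 'a) T"
  proof (cases "finite T")
    case T: True
    show ?thesis
    proof (cases "T = insert i S")
      case True
      then have "i \<in> T" "T - {i} = S" using assms by auto
      then show ?thesis
        using T True gsign_square[of "{i}" S, where 'a='a]
        by (simp only: gmult_gscale_left) (simp add: gmult_gen_left gscale_def gmonom_def)
    next
      case False
      then have "\<not> (i \<in> T \<and> T - {i} = S)" by auto
      then show ?thesis
        using T False by (simp only: gmult_gscale_left) (auto simp: gmult_gen_left gscale_def gmonom_def)
    qed
  next
    case False
    then show ?thesis using assms by (auto simp: gmult_def gmonom_def)
  qed
qed

text \<open>Test the anticommutation on the coefficient of \<open>S \<union> {j}\<close>: each side contributes a single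
  term, and for even \<open>card S\<close> the two signs agree instead of cancelling.\<close>

lemma anticommute_gL_imp_odd:
  fixes y l :: "nat set \<Rightarrow> 'a::field_char_0"
  assumes y: "y \<in> grass" and l: "l \<in> gL"
    and anti: "gmult y l = gscale (-1) (gmult l y)"
    and j: "\<And>A. y A \<noteq> 0 \<Longrightarrow> j \<notin> A" and lj: "l {j} \<noteq> 0" and yS: "y S \<noteq> 0"
  shows "odd (card S)"
proof (rule ccontr)
  assume even: "\<not> odd (card S)"
  have S: "finite S" "j \<notin> S" using y yS j by (auto simp: grass_def)
  let ?T = "insert j S"
  have l_singleton: "l B \<noteq> 0 \<Longrightarrow> \<exists>k. B = {k}" for B
    using l by (auto simp: gL_def card_1_singleton_iff)
  have "A = S" if A: "A \<subseteq> ?T" and yA: "y A \<noteq> 0" and lA: "l (?T - A) \<noteq> 0" for A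
  proof -
    obtain k where "?T - A = {k}" using l_singleton lA by blast
    then show "A = S" using j[OF yA] A S by (auto simp: set_eq_iff) metis
  qed
  then have "gmult y l ?T = gsign S (?T - S) * y S * l (?T - S)"
    using S by (intro gmult_single_term) auto
  moreover have "A = {j}" if "A \<subseteq> ?T" and lA: "l A \<noteq> 0" and yA: "y (?T - A) \<noteq> 0" for A
  proof -
    obtain k where "A = {k}" using l_singleton lA by blast
    then show "A = {j}" using j[OF yA] by blast
  qed
  then have "gmult l y ?T = gsign {j} (?T - {j}) * l {j} * y (?T - {j})"
    using S by (intro gmult_single_term) auto
  moreover have "?T - S = {j}" "?T - {j} = S" using S by auto
  ultimately have "gsign S {j} * y S * l {j} = - (gsign {j} S * l {j} * y S)"
    using anti by (simp add: gscale_def fun_eq_iff)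
  then have "(gsign S {j} + gsign {j} S) * (y S * l {j}) = (0::'a)"
    by (simp add: algebra_simps)
  then have "gsign S {j} + gsign {j} S = (0::'a)" using yS lj by simp
  moreover have "gsign S {j} = (gsign {j} S :: 'a)"
    using gsign_singleton_commute[OF S] even by simp
  ultimately show False using gsign_nonzero[of "{j}" S, where 'a='a] by simp
qed

subsection \<open>Homogeneous elements\<close>

definition homogeneous :: "bool \<Rightarrow> (nat set \<Rightarrow> 'a::field) \<Rightarrow> bool" where
  "homogeneous q x \<longleftrightarrow> (\<forall>S. x S \<noteq> 0 \<longrightarrow> odd (card S) = q)"

lemma gE0_eq: "gE0 = {x \<in> grass. homogeneous False x}"
  by (auto simp: gE0_def homogeneous_def)

lemma gE1_eq: "gE1 = {x \<in> grass. homogeneous True x}"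
  by (auto simp: gE1_def homogeneous_def)

lemma homogeneous_gscale: "homogeneous q x \<Longrightarrow> homogeneous q (gscale c x)"
  by (simp add: homogeneous_def gscale_def)

lemma homogeneous_sum:
  "(\<And>i. i \<in> F \<Longrightarrow> homogeneous q (f i)) \<Longrightarrow> homogeneous q (\<Sum>i\<in>F. f i)"
  unfolding homogeneous_def sum_apply by (metis (mono_tags, lifting) sum.neutral)

lemma homogeneous_gmult:
  assumes "homogeneous p x" "homogeneous q y"
  shows "homogeneous (p \<noteq> q) (gmult x y)"
  unfolding homogeneous_def
proof (intro allI impI)
  fix T assume nz: "gmult x y T \<noteq> 0"
  then have T: "finite T" by (auto simp: gmult_def split: if_splits)
  with nz obtain A where A: "A \<subseteq> T" "x A \<noteq> 0" "y (T - A) \<noteq> 0"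
    unfolding gmult_def by (metis (no_types, lifting) PowD mult_eq_0_iff sum.neutral)
  have "card T = card A + card (T - A)"
    using A(1) T by (simp add: card_Diff_subset card_mono finite_subset)
  then show "odd (card T) = (p \<noteq> q)" using assms A unfolding homogeneous_def by auto
qed


subsection \<open>Bases of \<open>L\<close>\<close>

lemma is_L_basis_coeffs_zero:
  assumes B: "is_L_basis b" and F: "finite F"
    and zero: "\<And>S. (\<Sum>n\<in>F. c n * b n S) = 0" and n: "n \<in> F"
  shows "c n = 0"
proof -
  have indep: "\<And>(d :: nat \<Rightarrow> 'a) N. (\<And>S. (\<Sum>k<N. d k * b k S) = 0) \<Longrightarrow> n < N \<Longrightarrow> d n = 0"
    using B unfolding is_L_basis_def by blast
  obtain N where N: "F \<subseteq> {..<N}" using F finite_nat_set_iff_bounded by auto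
  have "(\<Sum>k<N. (if k \<in> F then c k else 0) * b k S) = 0" for S
    using zero[of S] N by (simp add: if_distrib[of "\<lambda>a. a * _"] sum.If_cases Int_absorb1 cong: if_cong)
  then have "(if n \<in> F then c n else 0) = 0"
    by (rule indep) (use n N in auto)
  then show "c n = 0" using n by simp
qed

lemma is_L_basis_inj:
  assumes B: "is_L_basis b"
  shows "inj b"
proof (rule injI, rule ccontr)
  fix n m assume eq: "b n = b m" and ne: "n \<noteq> m"
  define c :: "nat \<Rightarrow> 'a" where "c k = (if k = n then 1 else -1)" for k
  have zero: "(\<Sum>k\<in>{n, m}. c k * b k S) = 0" for S
    using eq ne by (simp add: c_def)
  have "c n = 0" using is_L_basis_coeffs_zero[OF B _ zero] by simp
  then show False by (simp add: c_def)
qed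

lemma is_L_basis_independent:
  assumes B: "is_L_basis b"
  shows "gvec.independent (range b)"
proof
  assume "gvec.dependent (range b)"
  then obtain t u v where t: "finite t" "t \<subseteq> range b" and sum: "(\<Sum>v\<in>t. gscale (u v) v) = 0"
    and v: "v \<in> t" "u v \<noteq> 0"
    unfolding gvec.dependent_explicit by blast
  define F where "F = b -` t"
  have inj: "inj b" using is_L_basis_inj[OF B] .
  have F: "finite F" using t(1) inj by (simp add: F_def finite_vimageI)
  have t_eq: "t = b ` F" using t(2) by (auto simp: F_def)
  have zero: "(\<Sum>n\<in>F. u (b n) * b n S) = 0" for S
  proof -
    have "(\<Sum>n\<in>F. u (b n) * b n S) = (\<Sum>v\<in>t. gscale (u v) v) S"
      unfolding t_eq sum_apply gscale_def by (simp add: sum.reindex inj_on_subset[OF inj])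
    then show ?thesis using sum by simp
  qed
  obtain n where "n \<in> F" "v = b n" using v(1) t_eq by blast
  then show False using is_L_basis_coeffs_zero[OF B F zero] v(2) by simp
qed

lemma gL_in_span_gen:
  assumes x: "x \<in> gL" and V: "finite V" and supp: "\<And>j. x {j} \<noteq> 0 \<Longrightarrow> j \<in> V"
  shows "x \<in> gvec.span (gen ` V)"
proof -
  have "x = (\<Sum>j\<in>V. gscale (x {j}) (gen j))"
  proof
    fix S
    show "x S = (\<Sum>j\<in>V. gscale (x {j}) (gen j)) S"
    proof (cases "card S = 1")
      case True
      then obtain j where S: "S = {j}" by (auto simp: card_1_singleton_iff)
      have "(\<Sum>k\<in>V. gscale (x {k}) (gen k)) S = (\<Sum>k\<in>V. if k = j then x {j} else 0)"
        unfolding sum_apply by (rule sum.cong) (auto simp: gscale_def gen_def S)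
      also have "\<dots> = x S" using V supp S by auto
      finally show ?thesis by simp
    next
      case False
      then have "x S = 0" "S \<noteq> {j}" for j using x by (auto simp: gL_def)
      then show ?thesis by (simp add: sum_apply gscale_def gen_def)
    qed
  qed
  also have "\<dots> \<in> gvec.span (gen ` V)"
    by (intro gvec.span_sum gvec.span_scale gvec.span_base imageI)
  finally show ?thesis .
qed

lemma is_L_basis_escape:
  assumes B: "is_L_basis b" and I: "infinite I" and V: "finite V"
  obtains n j where "n \<in> I" "j \<notin> V" "b n {j} \<noteq> 0"
proof -
  obtain I' where I': "I' \<subseteq> I" "finite I'" "card I' = Suc (card V)"
    using infinite_arbitrarily_large[OF I] by blast
  have "\<not> b ` I' \<subseteq> gvec.span (gen ` V)"
  proof
    assume span: "b ` I' \<subseteq> gvec.span (gen ` V)"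
    have indep: "gvec.independent (b ` I')"
      by (rule gvec.independent_mono[OF is_L_basis_independent[OF B]]) blast
    have "card (b ` I') \<le> card (gen ` V :: (nat set \<Rightarrow> 'a) set)"
      using gvec.independent_span_bound[OF finite_imageI[OF V] indep span] by simp
    also have "\<dots> \<le> card V" by (rule card_image_le[OF V])
    finally show False
      using I' card_image[OF inj_on_subset[OF is_L_basis_inj[OF B]]] by simp
  qed
  then obtain n where n: "n \<in> I'" "b n \<notin> gvec.span (gen ` V)" by blast
  have "\<exists>j. j \<notin> V \<and> b n {j} \<noteq> 0"
  proof (rule ccontr)
    assume "\<nexists>j. j \<notin> V \<and> b n {j} \<noteq> 0"
    moreover have "b n \<in> gL" using B by (simp add: is_L_basis_def)
    ultimately have "b n \<in> gvec.span (gen ` V)" using gL_in_span_gen V by blast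
    with n show False by simp
  qed
  then show thesis using that n I' by blast
qed

subsection \<open>Automorphisms\<close>

lemma grass_aut_in_grass: "grass_aut \<phi> \<Longrightarrow> x \<in> grass \<Longrightarrow> \<phi> x \<in> grass"
  unfolding grass_aut_def bij_betw_def by blast

lemma grass_aut_plus: "grass_aut \<phi> \<Longrightarrow> x \<in> grass \<Longrightarrow> y \<in> grass \<Longrightarrow> \<phi> (x + y) = \<phi> x + \<phi> y"
  unfolding grass_aut_def gadd_eq_plus by blast

lemma grass_aut_gscale: "grass_aut \<phi> \<Longrightarrow> x \<in> grass \<Longrightarrow> \<phi> (gscale c x) = gscale c (\<phi> x)"
  unfolding grass_aut_def by blast

lemma grass_aut_gmult:
  "grass_aut \<phi> \<Longrightarrow> x \<in> grass \<Longrightarrow> y \<in> grass \<Longrightarrow> \<phi> (gmult x y) = gmult (\<phi> x) (\<phi> y)"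
  unfolding grass_aut_def by blast

lemma grass_aut_zero: "grass_aut \<phi> \<Longrightarrow> \<phi> 0 = 0"
  using grass_aut_gscale[of \<phi> gone 0] gmonom_in_grass[of "{}"]
  by (simp add: gone_eq_gmonom)

lemma grass_aut_sum:
  assumes aut: "grass_aut \<phi>" and f: "\<And>i. i \<in> F \<Longrightarrow> f i \<in> grass"
  shows "\<phi> (\<Sum>i\<in>F. f i) = (\<Sum>i\<in>F. \<phi> (f i))"
  using f
proof (induction F rule: infinite_finite_induct)
  case (insert i F)
  have "(\<Sum>j\<in>F. f j) \<in> grass"
    using insert.prems by (intro gvec.subspace_sum[OF subspace_grass]) auto
  then have "\<phi> (\<Sum>j\<in>insert i F. f j) = \<phi> (f i) + \<phi> (\<Sum>j\<in>F. f j)"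
    unfolding sum.insert[OF insert.hyps] using insert.prems by (intro grass_aut_plus[OF aut]) auto
  moreover have "\<phi> (\<Sum>j\<in>F. f j) = (\<Sum>j\<in>F. \<phi> (f j))"
    using insert.IH insert.prems by blast
  ultimately show ?case
    unfolding sum.insert[OF insert.hyps] by (simp only:)
qed (simp_all add: grass_aut_zero[OF aut])

lemma grass_aut_gen_odd:
  fixes \<phi> :: "(nat set \<Rightarrow> 'a::field_char_0) \<Rightarrow> (nat set \<Rightarrow> 'a)"
  assumes aut: "grass_aut \<phi>" and B: "is_L_basis b" and I: "infinite (I_beta \<phi> b)"
  shows "homogeneous True (\<phi> (gen m))"
  unfolding homogeneous_def
proof (intro allI impI)
  let ?y = "\<phi> (gen m)"
  fix S assume yS: "?y S \<noteq> 0"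
  have y: "?y \<in> grass" using grass_aut_in_grass[OF aut gen_in_grass] .
  then have "finite (\<Union>{A. ?y A \<noteq> 0})" by (auto simp: grass_def)
  then obtain n j where n: "n \<in> I_beta \<phi> b" and j: "j \<notin> \<Union>{A. ?y A \<noteq> 0}" and bj: "b n {j} \<noteq> 0"
    using is_L_basis_escape[OF B I] by blast
  have bL: "b n \<in> gL" using B by (simp add: is_L_basis_def)
  then have bG: "b n \<in> grass" using gL_subset_grass by blast
  obtain c :: 'a where c: "c \<noteq> 0" "\<phi> (b n) = gscale c (b n)"
  proof -
    have "\<phi> (b n) = gscale 1 (b n) \<or> \<phi> (b n) = gscale (-1) (b n)"
      using n by (simp add: I_beta_def gscale_def)
    then show thesis using that[of 1] that[of "-1"] by auto
  qed
  have "\<phi> (gmult (gen m) (b n)) = \<phi> (gmult (b n) (gscale (-1) (gen m)))"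
    using gen_anticommute_gL[OF bL] by (rule arg_cong)
  then have "gmult ?y (gscale c (b n)) = gmult (gscale c (b n)) (gscale (-1) ?y)"
    by (simp only: grass_aut_gmult[OF aut] grass_aut_gscale[OF aut] gen_in_grass bG
        gscale_in_grass c(2))
  then have "gscale c (gmult ?y (b n)) = gscale c (gscale (-1) (gmult (b n) ?y))"
    by (simp only: gmult_gscale_left gmult_gscale_right gvec.scale_scale mult.commute)
  then have "gmult ?y (b n) = gscale (-1) (gmult (b n) ?y)"
    using c(1) by (simp only: gvec.scale_cancel_left) simp
  then show "odd (card S) = True"
    using anticommute_gL_imp_odd[OF y bL _ _ bj yS] j by blast
qed

lemma grass_aut_gmonom_homogeneous:
  assumes aut: "grass_aut \<phi>" and gens: "\<And>m. homogeneous True (\<phi> (gen m))" and S: "finite S"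
  shows "homogeneous (odd (card S)) (\<phi> (gmonom S))"
  using S
proof (induction S rule: finite_induct)
  case empty
  have "\<phi> gone = gone" using aut by (simp add: grass_aut_def)
  then show ?case by (simp add: homogeneous_def gone_def flip: gone_eq_gmonom)
next
  case (insert i S)
  have "\<phi> (gmonom (insert i S)) = gmult (gscale (gsign {i} S) (\<phi> (gen i))) (\<phi> (gmonom S))"
    using insert(1,2) by (simp add: gmonom_insert grass_aut_gmult[OF aut] grass_aut_gscale[OF aut]
        gscale_in_grass gen_in_grass gmonom_in_grass)
  moreover have "homogeneous (True \<noteq> odd (card S)) \<dots>"
    by (rule homogeneous_gmult[OF homogeneous_gscale[OF gens] insert(3)])
  ultimately show ?case using insert(1,2) by simp
qed

lemma grass_aut_homogeneous:
  assumes aut: "grass_aut \<phi>" and gens: "\<And>m. homogeneous True (\<phi> (gen m))"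
    and x: "x \<in> grass" and q: "homogeneous q x"
  shows "homogeneous q (\<phi> x)"
proof -
  have supp: "finite {S. x S \<noteq> 0}" "\<And>S. x S \<noteq> 0 \<Longrightarrow> finite S"
    using x by (auto simp: grass_def)
  have "\<phi> x = \<phi> (\<Sum>S\<in>{S. x S \<noteq> 0}. gscale (x S) (gmonom S))"
    using grass_eq_sum_gmonom[OF x] by (rule arg_cong)
  also have "\<dots> = (\<Sum>S\<in>{S. x S \<noteq> 0}. \<phi> (gscale (x S) (gmonom S)))"
    using supp by (intro grass_aut_sum[OF aut] gscale_in_grass gmonom_in_grass) auto
  also have "\<dots> = (\<Sum>S\<in>{S. x S \<noteq> 0}. gscale (x S) (\<phi> (gmonom S)))"
    using supp by (intro sum.cong refl grass_aut_gscale[OF aut] gmonom_in_grass) auto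
  finally have "\<phi> x = \<dots>" .
  then show ?thesis
    using q supp unfolding homogeneous_def[of q x]
    by (auto intro!: homogeneous_sum homogeneous_gscale
        dest: grass_aut_gmonom_homogeneous[OF aut gens])
qed

lemma involution_image_eq:
  "(\<And>x. x \<in> A \<Longrightarrow> f x \<in> A) \<Longrightarrow> (\<And>x. x \<in> A \<Longrightarrow> f (f x) = x) \<Longrightarrow> f ` A = A"
  by (metis image_subsetI subsetI subset_antisym imageI)

theorem mainTheorem1:
  fixes \<phi> :: "(nat set \<Rightarrow> 'a::field_char_0) \<Rightarrow> (nat set \<Rightarrow> 'a)"
    and b :: "nat \<Rightarrow> nat set \<Rightarrow> 'a"
  assumes "grass_aut \<phi>"
    and "\<forall>x\<in>grass. \<phi> (\<phi> x) = x"
    and "is_L_basis b"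
    and "infinite (I_beta \<phi> b)"
    and "I_beta \<phi> b \<noteq> UNIV"
  shows "\<phi> ` gE0 = gE0 \<and> \<phi> ` gE1 = gE1"
proof -
  have gens: "\<And>m. homogeneous True (\<phi> (gen m))"
    using grass_aut_gen_odd assms(1,3,4) by blast
  have "\<phi> ` {x \<in> grass. homogeneous q x} = {x \<in> grass. homogeneous q x}" for q
    using grass_aut_in_grass[OF assms(1)] grass_aut_homogeneous[OF assms(1) gens] assms(2)
    by (intro involution_image_eq) auto
  then show ?thesis by (simp add: gE0_eq gE1_eq)
qed

end
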